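(* For $k\in\mathbb N$ let $\overline Y^k_t:=(Y_t\wedge k)\vee(-k)$, $t\in[0,T]$. If $Y^*\in\mathcal L^1(\mathcal Q)$ and $\rho_{\mathcal Q}$ is continuous from above at $0$, then $$\lim_{k\to\infty}\sup_{\mathrm Q\in\overline{\mathcal Q}}\Big|\sup_{\tau\in\mathcal T}\mathbb E_{\mathrm Q}[Y_\tau]-\sup_{\tau\in\mathcal T}\mathbb E_{\mathrm Q}[\overline Y^k_\tau]\Big|=0.$$
   Context: Let $(\Omega,\mathcal F,(\mathcal F_t)_{0\le t\le T},\mathrm P)$ be a filtered probability space ($0<T<\infty$) with right-continuous filtration, $\mathcal F=\mathcal F_T$, $\mathcal F_0$ trivial and containing all $\mathrm P$-null sets. $\mathcal T$ is the set of stopping times $\tau\le T$. $\mathcal Q$ is a nonempty set of probability measures on $\mathcal F$, each absolutely continuous w.r.t. $\mathrm P$. $\mathcal L^1(\mathcal Q)$ is the set of random variables $X$ with $\sup_{\mathrm Q\in\mathcal Q}\mathbb E_{\mathrm Q}[|X|]<\infty$. $Y=(Y_t)_{0\le t\le T}$ is a right-continuous adapted process with bounded paths, quasi left-uppersemicontinuous w.r.t. $\mathrm P$, and $Y^*:=\sup_{t\in[0,T]}|Y_t|$. $\mathcal X$ is the set of random variables $X$ with $|X|\le C(Y^*+1)$ $\mathrm P$-a.s. for some $C>0$; $\rho_{\mathcal Q}(X)=\sup_{\mathrm Q\in\mathcal Q}\mathbb E_{\mathrm Q}[X]$ for $X\in\mathcal X$; $\rho_{\mathcal Q}$ is continuous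 from above at $0$ if $\rho_{\mathcal Q}(X_n)\searrow0$ whenever $X_n\in\mathcal X$, $X_n\searrow0$ $\mathrm P$-a.s. $\overline{\mathcal Q}$ is the set of probability measures $\mathrm Q$ on $\mathcal F$ such that every $X\in\mathcal X$ is $\mathrm Q$-integrable and $\mathbb E_{\mathrm Q}[X]\le\rho_{\mathcal Q}(X)$ for all $X\in\mathcal X$. *)

theory Defs
  imports "HOL-Probability.Probability"
begin

text \<open>The reference probability P is the measure M; the
filtration is F :: real \<Rightarrow> 'a measure (only its values on [0,T] matter);
a process is a function Y :: real \<Rightarrow> 'a \<Rightarrow> real with Y t the value at time t.\<close>

definition usual_filtration :: "'a measure \<Rightarrow> real \<Rightarrow> (real \<Rightarrow> 'a measure) \<Rightarrow> bool" where
  "usual_filtration M T F \<longleftrightarrow>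
     (\<forall>t\<in>{0..T}. space (F t) = space M \<and> sets (F t) \<subseteq> sets M) \<and>
     (\<forall>s t. 0 \<le> s \<and> s \<le> t \<and> t \<le> T \<longrightarrow> sets (F s) \<subseteq> sets (F t)) \<and>
     (\<forall>t\<in>{0..<T}. sets (F t) = (\<Inter>s\<in>{t<..T}. sets (F s))) \<and>
     sets (F T) = sets M \<and>
     (\<forall>A\<in>sets (F 0). measure M A = 0 \<or> measure M A = 1) \<and>
     null_sets M \<subseteq> sets (F 0)"

definition stopping_times :: "'a measure \<Rightarrow> real \<Rightarrow> (real \<Rightarrow> 'a measure) \<Rightarrow> ('a \<Rightarrow> real) set" where
  "stopping_times M T F =
     {\<tau>. (\<forall>\<omega>\<in>space M. \<tau> \<omega> \<in> {0..T}) \<and>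
         (\<forall>t\<in>{0..T}. {\<omega>\<in>space M. \<tau> \<omega> \<le> t} \<in> sets (F t))}"

definition right_continuous_process :: "'a measure \<Rightarrow> real \<Rightarrow> (real \<Rightarrow> 'a \<Rightarrow> real) \<Rightarrow> bool" where
  "right_continuous_process M T Y \<longleftrightarrow>
     (\<forall>\<omega>\<in>space M. \<forall>t\<in>{0..<T}. ((\<lambda>s. Y s \<omega>) \<longlongrightarrow> Y t \<omega>) (at_right t))"

definition adapted_process :: "real \<Rightarrow> (real \<Rightarrow> 'a measure) \<Rightarrow> (real \<Rightarrow> 'a \<Rightarrow> real) \<Rightarrow> bool" where
  "adapted_process T F Y \<longleftrightarrow> (\<forall>t\<in>{0..T}. Y t \<in> borel_measurable (F t))"

definition bounded_paths :: "'a measure \<Rightarrow> real \<Rightarrow> (real \<Rightarrow> 'a \<Rightarrow> real) \<Rightarrow> bool" where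
  "bounded_paths M T Y \<longleftrightarrow> (\<forall>\<omega>\<in>space M. bounded ((\<lambda>t. Y t \<omega>) ` {0..T}))"

definition quasi_left_usc :: "'a measure \<Rightarrow> real \<Rightarrow> (real \<Rightarrow> 'a measure) \<Rightarrow> (real \<Rightarrow> 'a \<Rightarrow> real) \<Rightarrow> bool" where
  "quasi_left_usc M T F Y \<longleftrightarrow>
     (\<forall>\<tau>s \<tau>. (\<forall>n. \<tau>s n \<in> stopping_times M T F) \<and> \<tau> \<in> stopping_times M T F \<and>
        (\<forall>\<omega>\<in>space M. incseq (\<lambda>n. \<tau>s n \<omega>) \<and> (\<lambda>n. \<tau>s n \<omega>) \<longlonglongrightarrow> \<tau> \<omega>) \<longrightarrow>
        (AE \<omega> in M. limsup (\<lambda>n. ereal (Y (\<tau>s n \<omega>) \<omega>)) \<le> ereal (Y (\<tau> \<omega>) \<omega>)))"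

definition Ystar :: "real \<Rightarrow> (real \<Rightarrow> 'a \<Rightarrow> real) \<Rightarrow> 'a \<Rightarrow> real" where
  "Ystar T Y \<omega> = (SUP t\<in>{0..T}. \<bar>Y t \<omega>\<bar>)"

definition admissible_measures :: "'a measure \<Rightarrow> 'a measure set \<Rightarrow> bool" where
  "admissible_measures M Qs \<longleftrightarrow> Qs \<noteq> {} \<and>
     (\<forall>Q\<in>Qs. prob_space Q \<and> sets Q = sets M \<and> absolutely_continuous M Q)"

definition L1Q :: "'a measure \<Rightarrow> 'a measure set \<Rightarrow> ('a \<Rightarrow> real) set" where
  "L1Q M Qs = {X. X \<in> borel_measurable M \<and> (SUP Q\<in>Qs. \<integral>\<^sup>+ \<omega>. ennreal \<bar>X \<omega>\<bar> \<partial>Q) < \<infinity>}"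

definition Xspace :: "'a measure \<Rightarrow> real \<Rightarrow> (real \<Rightarrow> 'a \<Rightarrow> real) \<Rightarrow> ('a \<Rightarrow> real) set" where
  "Xspace M T Y = {X. X \<in> borel_measurable M \<and>
      (\<exists>C>0. AE \<omega> in M. \<bar>X \<omega>\<bar> \<le> C * (Ystar T Y \<omega> + 1))}"

definition rhoQ :: "'a measure set \<Rightarrow> ('a \<Rightarrow> real) \<Rightarrow> ereal" where
  "rhoQ Qs X = (SUP Q\<in>Qs. ereal (\<integral>\<omega>. X \<omega> \<partial>Q))"

definition cont_from_above_at_0 :: "'a measure \<Rightarrow> real \<Rightarrow> (real \<Rightarrow> 'a \<Rightarrow> real) \<Rightarrow> 'a measure set \<Rightarrow> bool" where
  "cont_from_above_at_0 M T Y Qs \<longleftrightarrow>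
     (\<forall>Xs. (\<forall>n. Xs n \<in> Xspace M T Y) \<and>
           (AE \<omega> in M. decseq (\<lambda>n. Xs n \<omega>) \<and> (\<lambda>n. Xs n \<omega>) \<longlonglongrightarrow> 0) \<longrightarrow>
           decseq (\<lambda>n. rhoQ Qs (Xs n)) \<and> (\<lambda>n. rhoQ Qs (Xs n)) \<longlonglongrightarrow> 0)"

definition Qbar :: "'a measure \<Rightarrow> real \<Rightarrow> (real \<Rightarrow> 'a \<Rightarrow> real) \<Rightarrow> 'a measure set \<Rightarrow> 'a measure set" where
  "Qbar M T Y Qs = {Q. prob_space Q \<and> sets Q = sets M \<and>
      (\<forall>X\<in>Xspace M T Y. integrable Q X \<and> ereal (\<integral>\<omega>. X \<omega> \<partial>Q) \<le> rhoQ Qs X)}"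

definition trunc_proc :: "(real \<Rightarrow> 'a \<Rightarrow> real) \<Rightarrow> nat \<Rightarrow> real \<Rightarrow> 'a \<Rightarrow> real" where
  "trunc_proc Y k t \<omega> = max (min (Y t \<omega>) (real k)) (- real k)"

definition stop_value :: "'a measure \<Rightarrow> real \<Rightarrow> (real \<Rightarrow> 'a measure) \<Rightarrow> 'a measure \<Rightarrow> (real \<Rightarrow> 'a \<Rightarrow> real) \<Rightarrow> ereal" where
  "stop_value M T F Q Y = (SUP \<tau>\<in>stopping_times M T F. ereal (\<integral>\<omega>. Y (\<tau> \<omega>) \<omega> \<partial>Q))"

end

theory Submission
  imports Defs
begin

text \<open>Truncating Y at levels \<plusminus>k moves Y_t by at most (|Y_t| - k)^+ \<le> (Y^* - k)^+, for every t at
once. Every Q in \<Q>-bar integrates this excess to at most \<rho>((Y^* - k)^+), so the two optimal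
stopping values under Q differ by at most \<rho>((Y^* - k)^+), uniformly in Q; and \<rho>((Y^* - k)^+)
tends to 0 by continuity from above of \<rho> at 0.\<close>

lemma subalgebra_filtration:
  assumes "usual_filtration M T F" and "t \<in> {0..T}"
  shows "subalgebra M (F t)"
  using assms unfolding usual_filtration_def subalgebra_def by auto

lemma stopping_time_borel_measurable:
  assumes uf: "usual_filtration M T F" and \<tau>: "\<tau> \<in> stopping_times M T F"
  shows "\<tau> \<in> borel_measurable M"
  unfolding borel_measurable_iff_le
proof
  fix a :: real
  have range: "0 \<le> \<tau> \<omega> \<and> \<tau> \<omega> \<le> T" if "\<omega> \<in> space M" for \<omega>
    using \<tau> that unfolding stopping_times_def by auto
  consider "a < 0" | "0 \<le> a" "a \<le> T" | "T < a" by linarith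
  then show "{\<omega> \<in> space M. \<tau> \<omega> \<le> a} \<in> sets M"
  proof cases
    case 1
    then have "{\<omega> \<in> space M. \<tau> \<omega> \<le> a} = {}" using range by fastforce
    then show ?thesis by (simp only: sets.empty_sets)
  next
    case 2
    then have "{\<omega> \<in> space M. \<tau> \<omega> \<le> a} \<in> sets (F a)"
      using \<tau> unfolding stopping_times_def by auto
    then show ?thesis using subalgebra_filtration[OF uf] 2 unfolding subalgebra_def by auto
  next
    case 3
    then have "{\<omega> \<in> space M. \<tau> \<omega> \<le> a} = space M" using range by fastforce
    then show ?thesis by (simp only: sets.top)
  qed
qed

text \<open>The smallest point of the grid (1/(n+1)) \<int> strictly to the right of x, clipped to [0,T].\<close>
definition right_grid_approx :: "real \<Rightarrow> nat \<Rightarrow> real \<Rightarrow> real" where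
  "right_grid_approx T n x = max 0 (min T ((of_int \<lfloor>real (Suc n) * x\<rfloor> + 1) / real (Suc n)))"

lemma right_grid_approx_bounds:
  assumes "0 \<le> x" and "x < T"
  shows "x < right_grid_approx T n x" and "right_grid_approx T n x \<le> x + 1 / real (Suc n)"
proof -
  define m where "m = real (Suc n)"
  have "of_int \<lfloor>m * x\<rfloor> \<le> m * x" "m * x < of_int \<lfloor>m * x\<rfloor> + 1" "0 < m"
    unfolding m_def by linarith+
  then have "x < (of_int \<lfloor>m * x\<rfloor> + 1) / m" "(of_int \<lfloor>m * x\<rfloor> + 1) / m \<le> x + 1 / m"
    by (simp_all add: field_simps)
  then show "x < right_grid_approx T n x" "right_grid_approx T n x \<le> x + 1 / real (Suc n)"
    using assms unfolding right_grid_approx_def m_def by auto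
qed

lemma right_grid_approx_at_right:
  assumes "0 \<le> x" and "x < T"
  shows "filterlim (\<lambda>n. right_grid_approx T n x) (at_right x) sequentially"
proof -
  note bounds = right_grid_approx_bounds[OF assms]
  have upper: "(\<lambda>n. x + 1 / real (Suc n)) \<longlonglongrightarrow> x"
    using tendsto_add[OF tendsto_const LIMSEQ_Suc[OF lim_1_over_n], of x] by simp
  have "(\<lambda>n. right_grid_approx T n x) \<longlonglongrightarrow> x"
    by (rule tendsto_sandwich[OF _ _ tendsto_const upper])
       (intro always_eventually allI less_imp_le bounds)+
  moreover have "\<forall>\<^sub>F n in sequentially. right_grid_approx T n x \<in> {x<..} \<and> right_grid_approx T n x \<noteq> x"
    using bounds(1) by (intro always_eventually allI) (simp add: less_imp_neq[symmetric])
  ultimately show ?thesis unfolding filterlim_at by blast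
qed

lemma right_grid_approx_right_end:
  assumes "0 \<le> T"
  shows "right_grid_approx T n T = T"
proof -
  have "T < (of_int \<lfloor>real (Suc n) * T\<rfloor> + 1) / real (Suc n)"
    by (simp add: field_simps) linarith
  then show ?thesis using assms unfolding right_grid_approx_def by simp
qed

text \<open>Y_\<tau> is the pointwise limit of Y evaluated at the countably-valued stopping times
right_grid_approx T n \<circ> \<tau>, by right continuity of the paths.\<close>
lemma stopped_process_borel_measurable:
  assumes uf: "usual_filtration M T F"
    and rc: "right_continuous_process M T Y"
    and ad: "adapted_process T F Y"
    and \<tau>: "\<tau> \<in> stopping_times M T F" and T: "0 < T"
  shows "(\<lambda>\<omega>. Y (\<tau> \<omega>) \<omega>) \<in> borel_measurable M"
proof (rule borel_measurable_LIMSEQ_real)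
  have Y_meas: "Y t \<in> borel_measurable M" if "t \<in> {0..T}" for t
    using measurable_from_subalg[OF subalgebra_filtration[OF uf that]] ad that
    unfolding adapted_process_def by blast
  have \<tau>_meas: "\<tau> \<in> borel_measurable M"
    by (rule stopping_time_borel_measurable[OF uf \<tau>])
  fix n
  have "(\<lambda>\<omega>. \<lfloor>real (Suc n) * \<tau> \<omega>\<rfloor>) \<in> measurable M (count_space UNIV)"
    using \<tau>_meas by measurable
  moreover have "(\<lambda>\<omega>. Y (max 0 (min T ((of_int i + 1) / real (Suc n)))) \<omega>) \<in> borel_measurable M"
    for i :: int
    by (rule Y_meas) (use T in auto)
  ultimately show "(\<lambda>\<omega>. Y (right_grid_approx T n (\<tau> \<omega>)) \<omega>) \<in> borel_measurable M"
    unfolding right_grid_approx_def by (rule measurable_compose_countable[rotated])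
next
  fix \<omega> assume \<omega>: "\<omega> \<in> space M"
  then have "0 \<le> \<tau> \<omega>" "\<tau> \<omega> \<le> T" using \<tau> unfolding stopping_times_def by auto
  then consider "\<tau> \<omega> = T" | "0 \<le> \<tau> \<omega>" "\<tau> \<omega> < T" by linarith
  then show "(\<lambda>n. Y (right_grid_approx T n (\<tau> \<omega>)) \<omega>) \<longlonglongrightarrow> Y (\<tau> \<omega>) \<omega>"
  proof cases
    case 1
    then show ?thesis using right_grid_approx_right_end T by simp
  next
    case 2
    then have "((\<lambda>t. Y t \<omega>) \<longlongrightarrow> Y (\<tau> \<omega>) \<omega>) (at_right (\<tau> \<omega>))"
      using rc \<omega> unfolding right_continuous_process_def by auto
    then show ?thesis using filterlim_compose right_grid_approx_at_right[OF 2] by blast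
  qed
qed

lemma abs_le_Ystar:
  assumes "bounded_paths M T Y" and "\<omega> \<in> space M" and "t \<in> {0..T}"
  shows "\<bar>Y t \<omega>\<bar> \<le> Ystar T Y \<omega>"
proof -
  have "bounded ((\<lambda>t. Y t \<omega>) ` {0..T})"
    using assms unfolding bounded_paths_def by auto
  then obtain a where "\<forall>t\<in>{0..T}. \<bar>Y t \<omega>\<bar> \<le> a"
    unfolding bounded_iff by auto
  then have "bdd_above ((\<lambda>t. \<bar>Y t \<omega>\<bar>) ` {0..T})"
    by (auto intro: bdd_aboveI2)
  then show ?thesis unfolding Ystar_def by (rule cSUP_upper[OF assms(3)])
qed

lemma Xspace_if_abs_le_Ystar:
  assumes "f \<in> borel_measurable M" and "\<And>\<omega>. \<omega> \<in> space M \<Longrightarrow> \<bar>f \<omega>\<bar> \<le> Ystar T Y \<omega>"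
  shows "f \<in> Xspace M T Y"
  unfolding Xspace_def
  by (intro CollectI conjI assms(1) exI[of _ 1] AE_I2) (auto dest: assms(2))

lemma abs_trunc_proc_le: "\<bar>trunc_proc Y k t \<omega>\<bar> \<le> \<bar>Y t \<omega>\<bar>"
  unfolding trunc_proc_def by linarith

lemma abs_diff_trunc_proc_le: "\<bar>Y t \<omega> - trunc_proc Y k t \<omega>\<bar> \<le> max 0 (\<bar>Y t \<omega>\<bar> - real k)"
  unfolding trunc_proc_def by linarith

lemma abs_integral_le_integral:
  fixes f :: "'a \<Rightarrow> real"
  assumes "integrable M f" and "integrable M g" and "\<And>x. x \<in> space M \<Longrightarrow> \<bar>f x\<bar> \<le> g x"
  shows "\<bar>\<integral>x. f x \<partial>M\<bar> \<le> (\<integral>x. g x \<partial>M)"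
proof -
  have "(\<integral>x. f x \<partial>M) \<le> (\<integral>x. g x \<partial>M)"
    using assms by (intro integral_mono) (auto simp: abs_le_iff)
  moreover have "(\<integral>x. - f x \<partial>M) \<le> (\<integral>x. g x \<partial>M)"
    using assms by (intro integral_mono) (auto simp: abs_le_iff)
  ultimately show ?thesis by simp
qed

lemma SUP_ereal_abs_diff_le:
  fixes a b :: "'t \<Rightarrow> real"
  assumes "S \<noteq> {}"
    and "\<And>x. x \<in> S \<Longrightarrow> \<bar>a x\<bar> \<le> B" and "\<And>x. x \<in> S \<Longrightarrow> \<bar>b x\<bar> \<le> B"
    and diff: "\<And>x. x \<in> S \<Longrightarrow> \<bar>a x - b x\<bar> \<le> c"
  shows "\<bar>(SUP x\<in>S. ereal (a x)) - (SUP x\<in>S. ereal (b x))\<bar> \<le> ereal c"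
proof -
  have real_SUP: "\<exists>r. (SUP x\<in>S. ereal (f x)) = ereal r"
    if "\<And>x. x \<in> S \<Longrightarrow> \<bar>f x\<bar> \<le> B" for f
  proof -
    obtain x0 where "x0 \<in> S" using assms(1) by blast
    then have "ereal (- B) \<le> (SUP x\<in>S. ereal (f x))"
      using that[of x0] by (intro SUP_upper2[of x0]) auto
    moreover have "(SUP x\<in>S. ereal (f x)) \<le> ereal B"
      using that by (intro SUP_least) (auto simp: abs_le_iff)
    ultimately show ?thesis by (cases "SUP x\<in>S. ereal (f x)") auto
  qed
  obtain sa where sa: "(SUP x\<in>S. ereal (a x)) = ereal sa" using real_SUP assms(2) by blast
  obtain sb where sb: "(SUP x\<in>S. ereal (b x)) = ereal sb" using real_SUP assms(3) by blast
  have "a x \<le> b x + c" "b x \<le> a x + c" if "x \<in> S" for x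
    using diff[OF that] by linarith+
  then have "(SUP x\<in>S. ereal (a x)) \<le> (SUP x\<in>S. ereal (b x)) + ereal c"
    "(SUP x\<in>S. ereal (b x)) \<le> (SUP x\<in>S. ereal (a x)) + ereal c"
    by (auto intro!: SUP_least order_trans[OF _ add_right_mono[OF SUP_upper]])
  then show ?thesis unfolding sa sb by simp
qed

lemma zero_in_stopping_times:
  assumes "usual_filtration M T F" and "0 \<le> T"
  shows "(\<lambda>_. 0) \<in> stopping_times M T F"
proof -
  have "space M \<in> sets (F t)" if "t \<in> {0..T}" for t
  proof -
    have "space (F t) = space M"
      using assms(1) that unfolding usual_filtration_def by (meson conjunct1 bspec)
    then show ?thesis using sets.top[of "F t"] by simp
  qed
  then show ?thesis using assms(2) unfolding stopping_times_def by simp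
qed

lemma Ystar_nonneg:
  assumes "bounded_paths M T Y" and "0 \<le> T" and "\<omega> \<in> space M"
  shows "0 \<le> Ystar T Y \<omega>"
  using abs_le_Ystar[OF assms(1,3), of 0] assms(2) by auto

lemma Ystar_excess_in_Xspace:
  assumes "Ystar T Y \<in> borel_measurable M" and "\<And>\<omega>. \<omega> \<in> space M \<Longrightarrow> 0 \<le> Ystar T Y \<omega>"
  shows "(\<lambda>\<omega>. max 0 (Ystar T Y \<omega> - real k)) \<in> Xspace M T Y"
  using assms by (intro Xspace_if_abs_le_Ystar) auto

lemma stopped_processes_in_Xspace:
  assumes "usual_filtration M T F" and "0 < T"
    and "right_continuous_process M T Y" and "adapted_process T F Y"
    and bp: "bounded_paths M T Y" and \<tau>: "\<tau> \<in> stopping_times M T F"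
  shows "(\<lambda>\<omega>. Y (\<tau> \<omega>) \<omega>) \<in> Xspace M T Y" and "(\<lambda>\<omega>. trunc_proc Y k (\<tau> \<omega>) \<omega>) \<in> Xspace M T Y"
proof -
  have bound: "\<bar>Y (\<tau> \<omega>) \<omega>\<bar> \<le> Ystar T Y \<omega>" if "\<omega> \<in> space M" for \<omega>
    using abs_le_Ystar[OF bp that] \<tau> that unfolding stopping_times_def by auto
  have meas: "(\<lambda>\<omega>. Y (\<tau> \<omega>) \<omega>) \<in> borel_measurable M"
    using stopped_process_borel_measurable assms by blast
  then show "(\<lambda>\<omega>. Y (\<tau> \<omega>) \<omega>) \<in> Xspace M T Y"
    using bound by (rule Xspace_if_abs_le_Ystar)
  have "(\<lambda>\<omega>. trunc_proc Y k (\<tau> \<omega>) \<omega>) \<in> borel_measurable M"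
    unfolding trunc_proc_def using meas by measurable
  moreover have "\<bar>trunc_proc Y k (\<tau> \<omega>) \<omega>\<bar> \<le> Ystar T Y \<omega>" if "\<omega> \<in> space M" for \<omega>
    using abs_trunc_proc_le[of Y k "\<tau> \<omega>" \<omega>] bound[OF that] by linarith
  ultimately show "(\<lambda>\<omega>. trunc_proc Y k (\<tau> \<omega>) \<omega>) \<in> Xspace M T Y"
    by (rule Xspace_if_abs_le_Ystar)
qed

lemma Qbar_stop_value_trunc_diff_le:
  assumes uf: "usual_filtration M T F" and T: "0 < T"
    and rc: "right_continuous_process M T Y" and ad: "adapted_process T F Y"
    and bp: "bounded_paths M T Y" and Ystar_meas: "Ystar T Y \<in> borel_measurable M"
    and Q: "Q \<in> Qbar M T Y Qs"
  shows "\<bar>stop_value M T F Q Y - stop_value M T F Q (trunc_proc Y k)\<bar>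
           \<le> rhoQ Qs (\<lambda>\<omega>. max 0 (Ystar T Y \<omega> - real k))"
proof -
  define excess where "excess = (\<lambda>\<omega>. max 0 (Ystar T Y \<omega> - real k))"
  have sets_Q: "sets Q = sets M" and
    dominated: "\<And>X. X \<in> Xspace M T Y \<Longrightarrow> integrable Q X \<and> ereal (\<integral>\<omega>. X \<omega> \<partial>Q) \<le> rhoQ Qs X"
    using Q unfolding Qbar_def by blast+
  have space_Q: "space Q = space M" by (rule sets_eq_imp_space_eq[OF sets_Q])
  have nonneg: "0 \<le> Ystar T Y \<omega>" if "\<omega> \<in> space M" for \<omega>
    using Ystar_nonneg[OF bp _ that] T by simp
  have "Ystar T Y \<in> Xspace M T Y"
    using Ystar_meas nonneg by (intro Xspace_if_abs_le_Ystar) auto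
  moreover have "excess \<in> Xspace M T Y"
    unfolding excess_def using Ystar_meas nonneg by (rule Ystar_excess_in_Xspace)
  ultimately have int_Ystar: "integrable Q (Ystar T Y)" and int_excess: "integrable Q excess"
    and excess_le_rho: "ereal (\<integral>\<omega>. excess \<omega> \<partial>Q) \<le> rhoQ Qs excess"
    using dominated by auto
  have "\<bar>stop_value M T F Q Y - stop_value M T F Q (trunc_proc Y k)\<bar> \<le> ereal (\<integral>\<omega>. excess \<omega> \<partial>Q)"
    unfolding stop_value_def
  proof (rule SUP_ereal_abs_diff_le)
    show "stopping_times M T F \<noteq> {}" using zero_in_stopping_times[OF uf] T by auto
    fix \<tau> assume \<tau>: "\<tau> \<in> stopping_times M T F"
    note in_Xspace = stopped_processes_in_Xspace[OF uf T rc ad bp \<tau>]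
    have int_Y: "integrable Q (\<lambda>\<omega>. Y (\<tau> \<omega>) \<omega>)"
      and int_trunc: "integrable Q (\<lambda>\<omega>. trunc_proc Y k (\<tau> \<omega>) \<omega>)"
      using dominated in_Xspace by auto
    have bound: "\<bar>Y (\<tau> \<omega>) \<omega>\<bar> \<le> Ystar T Y \<omega>" if "\<omega> \<in> space Q" for \<omega>
      using abs_le_Ystar[OF bp] \<tau> that space_Q unfolding stopping_times_def by auto
    then have bound_trunc: "\<bar>trunc_proc Y k (\<tau> \<omega>) \<omega>\<bar> \<le> Ystar T Y \<omega>" if "\<omega> \<in> space Q" for \<omega>
      using abs_trunc_proc_le[of Y k "\<tau> \<omega>" \<omega>] that by fastforce
    show "\<bar>\<integral>\<omega>. Y (\<tau> \<omega>) \<omega> \<partial>Q\<bar> \<le> (\<integral>\<omega>. Ystar T Y \<omega> \<partial>Q)"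
      using bound by (intro abs_integral_le_integral int_Y int_Ystar)
    show "\<bar>\<integral>\<omega>. trunc_proc Y k (\<tau> \<omega>) \<omega> \<partial>Q\<bar> \<le> (\<integral>\<omega>. Ystar T Y \<omega> \<partial>Q)"
      using bound_trunc by (intro abs_integral_le_integral int_trunc int_Ystar)
    have "\<bar>\<integral>\<omega>. Y (\<tau> \<omega>) \<omega> - trunc_proc Y k (\<tau> \<omega>) \<omega> \<partial>Q\<bar> \<le> (\<integral>\<omega>. excess \<omega> \<partial>Q)"
    proof (intro abs_integral_le_integral Bochner_Integration.integrable_diff int_Y int_trunc int_excess)
      fix \<omega> assume "\<omega> \<in> space Q"
      then show "\<bar>Y (\<tau> \<omega>) \<omega> - trunc_proc Y k (\<tau> \<omega>) \<omega>\<bar> \<le> excess \<omega>"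
        using abs_diff_trunc_proc_le[of Y "\<tau> \<omega>" \<omega> k] bound unfolding excess_def by force
    qed
    then show "\<bar>(\<integral>\<omega>. Y (\<tau> \<omega>) \<omega> \<partial>Q) - (\<integral>\<omega>. trunc_proc Y k (\<tau> \<omega>) \<omega> \<partial>Q)\<bar> \<le> (\<integral>\<omega>. excess \<omega> \<partial>Q)"
      using int_Y int_trunc by simp
  qed
  also have "\<dots> \<le> rhoQ Qs excess" by (rule excess_le_rho)
  finally show ?thesis unfolding excess_def .
qed

lemma admissible_subset_Qbar:
  assumes adm: "admissible_measures M Qs" and L1: "Ystar T Y \<in> L1Q M Qs"
  shows "Qs \<subseteq> Qbar M T Y Qs"
proof
  fix Q assume Q: "Q \<in> Qs"
  have prob: "prob_space Q" and sets_Q: "sets Q = sets M" and ac: "absolutely_continuous M Q"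
    using adm Q unfolding admissible_measures_def by blast+
  have "Ystar T Y \<in> borel_measurable M" using L1 unfolding L1Q_def by blast
  then have Ystar_meas: "Ystar T Y \<in> borel_measurable Q"
    using measurable_cong_sets[OF sets_Q refl] by blast
  have "(\<integral>\<^sup>+ \<omega>. ennreal \<bar>Ystar T Y \<omega>\<bar> \<partial>Q) < \<infinity>"
    using L1 SUP_upper[OF Q, of "\<lambda>Q. \<integral>\<^sup>+ \<omega>. ennreal \<bar>Ystar T Y \<omega>\<bar> \<partial>Q"]
    unfolding L1Q_def by auto
  then have int_Ystar: "integrable Q (Ystar T Y)"
    by (intro integrableI_bounded Ystar_meas) simp
  have "integrable Q X \<and> ereal (\<integral>\<omega>. X \<omega> \<partial>Q) \<le> rhoQ Qs X" if X: "X \<in> Xspace M T Y" for X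
  proof
    obtain C where C: "AE \<omega> in M. \<bar>X \<omega>\<bar> \<le> C * (Ystar T Y \<omega> + 1)"
      and X_meas: "X \<in> borel_measurable M"
      using X unfolding Xspace_def by blast
    have "AE \<omega> in Q. \<bar>X \<omega>\<bar> \<le> C * (Ystar T Y \<omega> + 1)"
      by (rule absolutely_continuous_AE[OF sets_Q ac C])
    then have "AE \<omega> in Q. norm (X \<omega>) \<le> norm (C * (Ystar T Y \<omega> + 1))"
      by (rule eventually_mono) simp
    moreover have "integrable Q (\<lambda>\<omega>. C * (Ystar T Y \<omega> + 1))"
      using int_Ystar prob_space.finite_measure[OF prob]
      by (intro integrable_mult_right Bochner_Integration.integrable_add finite_measure.integrable_const)
    moreover have "X \<in> borel_measurable Q"
      using X_meas measurable_cong_sets[OF sets_Q refl] by blast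
    ultimately show "integrable Q X"
      by (rule Bochner_Integration.integrable_bound[rotated 2])
    show "ereal (\<integral>\<omega>. X \<omega> \<partial>Q) \<le> rhoQ Qs X"
      unfolding rhoQ_def by (rule SUP_upper[OF Q])
  qed
  then show "Q \<in> Qbar M T Y Qs" using prob sets_Q unfolding Qbar_def by blast
qed

lemma rhoQ_Ystar_excess_tendsto_0:
  assumes cont: "cont_from_above_at_0 M T Y Qs"
    and Ystar_meas: "Ystar T Y \<in> borel_measurable M"
    and nonneg: "\<And>\<omega>. \<omega> \<in> space M \<Longrightarrow> 0 \<le> Ystar T Y \<omega>"
  shows "(\<lambda>k. rhoQ Qs (\<lambda>\<omega>. max 0 (Ystar T Y \<omega> - real k))) \<longlonglongrightarrow> 0"
proof -
  define excess where "excess = (\<lambda>(k::nat) \<omega>. max 0 (Ystar T Y \<omega> - real k))"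
  have in_Xspace: "\<forall>k. excess k \<in> Xspace M T Y"
    unfolding excess_def using Ystar_meas nonneg by (intro allI Ystar_excess_in_Xspace)
  have decreasing: "decseq (\<lambda>k. excess k \<omega>)" for \<omega>
    unfolding excess_def by (intro decseq_SucI) simp
  have vanishing: "(\<lambda>k. excess k \<omega>) \<longlonglongrightarrow> 0" for \<omega>
  proof (rule tendsto_eventually)
    obtain N :: nat where "Ystar T Y \<omega> < real N" using reals_Archimedean2 by blast
    then show "\<forall>\<^sub>F k in sequentially. excess k \<omega> = 0"
      unfolding excess_def eventually_sequentially by (intro exI[of _ N]) auto
  qed
  have "decseq (\<lambda>k. rhoQ Qs (excess k)) \<and> (\<lambda>k. rhoQ Qs (excess k)) \<longlonglongrightarrow> 0"
    using cont[unfolded cont_from_above_at_0_def, rule_format, of excess] in_Xspace decreasing vanishing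
    by blast
  then show ?thesis unfolding excess_def by blast
qed

theorem lemma6p3:
  fixes M :: "'a measure" and T :: real and F :: "real \<Rightarrow> 'a measure"
    and Qs :: "'a measure set" and Y :: "real \<Rightarrow> 'a \<Rightarrow> real"
  assumes "prob_space M"
    and "0 < T"
    and "usual_filtration M T F"
    and "admissible_measures M Qs"
    and "right_continuous_process M T Y"
    and "adapted_process T F Y"
    and "bounded_paths M T Y"
    and "quasi_left_usc M T F Y"
    and "Ystar T Y \<in> L1Q M Qs"
    and "cont_from_above_at_0 M T Y Qs"
  shows "(\<lambda>k. SUP Q\<in>Qbar M T Y Qs.
            \<bar>stop_value M T F Q Y - stop_value M T F Q (trunc_proc Y k)\<bar>) \<longlonglongrightarrow> 0"
proof -
  have Ystar_meas: "Ystar T Y \<in> borel_measurable M"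
    using assms(9) unfolding L1Q_def by blast
  have nonneg: "0 \<le> Ystar T Y \<omega>" if "\<omega> \<in> space M" for \<omega>
    using Ystar_nonneg[OF assms(7) _ that] assms(2) by simp
  have "Qs \<noteq> {}" using assms(4) unfolding admissible_measures_def by blast
  then obtain Q0 where Q0: "Q0 \<in> Qbar M T Y Qs"
    using admissible_subset_Qbar[OF assms(4,9)] by blast
  show ?thesis
  proof (rule tendsto_sandwich[OF _ _ tendsto_const
        rhoQ_Ystar_excess_tendsto_0[OF assms(10) Ystar_meas nonneg]])
    show "\<forall>\<^sub>F k in sequentially. 0 \<le> (SUP Q\<in>Qbar M T Y Qs.
            \<bar>stop_value M T F Q Y - stop_value M T F Q (trunc_proc Y k)\<bar>)"
      by (intro always_eventually allI SUP_upper2[OF Q0] abs_ereal_pos)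
    show "\<forall>\<^sub>F k in sequentially. (SUP Q\<in>Qbar M T Y Qs.
            \<bar>stop_value M T F Q Y - stop_value M T F Q (trunc_proc Y k)\<bar>)
          \<le> rhoQ Qs (\<lambda>\<omega>. max 0 (Ystar T Y \<omega> - real k))"
      by (intro always_eventually allI SUP_least Qbar_stop_value_trunc_diff_le assms(2,3,5,6,7) Ystar_meas)
  qed
qed

end
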